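(* There is an algorithm that, given an integer $k\ge 1$ and a finite multiset $H$ of $n$ nonnegative integers, decides in $O(n\log n)$ time whether there exists a rooted $k$-ary tree whose multiset of node heights equals $H$.
   Context: A rooted $k$-ary tree is a rooted tree in which every node has at most $k$ children. The height of a leaf is $0$; the height of any other node is one more than the maximum height of its children. The multiset of heights has one entry per node. Running time is measured with arithmetic on the input integers taking unit time. *)

theory Defs
  imports Complex_Main "HOL-Library.Multiset"
begin

datatype tree = Node "tree list"

fun height :: "tree \<Rightarrow> nat" where
  "height (Node ts) = (if ts = [] then 0 else Suc (fold max (map height ts) 0))"

fun kary :: "nat \<Rightarrow> tree \<Rightarrow> bool" where
  "kary k (Node ts) = (length ts \<le> k \<and> (\<forall>t\<in>set ts. kary k t))"

fun heights :: "tree \<Rightarrow> nat multiset" where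
  "heights (Node ts) = add_mset (height (Node ts)) (sum_list (map heights ts))"

definition realizable :: "nat \<Rightarrow> nat multiset \<Rightarrow> bool" where
  "realizable k H \<longleftrightarrow> (\<exists>t. kary k t \<and> heights t = H)"

datatype instr =
    LoadC nat int
  | Add nat nat nat
  | Sub nat nat nat
  | Load nat nat
  | Store nat nat
  | Jz nat nat
  | Jneg nat nat

type_synonym config = "nat \<times> (nat \<Rightarrow> int)"

fun step :: "instr list \<Rightarrow> config \<Rightarrow> config" where
  "step P (pc, m) = (case P ! pc of
      LoadC r c \<Rightarrow> (Suc pc, m(r := c))
    | Add r a b \<Rightarrow> (Suc pc, m(r := m a + m b))
    | Sub r a b \<Rightarrow> (Suc pc, m(r := m a - m b))
    | Load r a \<Rightarrow> (Suc pc, m(r := m (nat (m a))))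
    | Store a r \<Rightarrow> (Suc pc, m(nat (m a) := m r))
    | Jz r j \<Rightarrow> (if m r = 0 then j else Suc pc, m)
    | Jneg r j \<Rightarrow> (if m r < 0 then j else Suc pc, m))"

fun run :: "instr list \<Rightarrow> nat \<Rightarrow> config \<Rightarrow> config" where
  "run P 0 s = s"
| "run P (Suc t) s = (if fst s \<ge> length P then s else run P t (step P s))"

definition halted :: "instr list \<Rightarrow> config \<Rightarrow> bool" where
  "halted P s \<longleftrightarrow> fst s \<ge> length P"

text \<open>Input encoding: cell 0 holds k, cell 1 holds n, cells 2..n+1 hold the
elements of the multiset (listed in an arbitrary order); all other cells are 0.
Output: cell 0 equals 1 on acceptance.\<close>

definition input :: "nat \<Rightarrow> nat list \<Rightarrow> nat \<Rightarrow> int" where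
  "input k hs = (\<lambda>i. if i = 0 then int k
                     else if i = 1 then int (length hs)
                     else if i - 2 < length hs then int (hs ! (i - 2)) else 0)"

end

theory Submission
  imports Defs
begin

text \<open>
  A multiset \<open>H\<close> of heights is realised by a \<open>k\<close>-ary tree iff it is nonempty, all its entries are
  below \<open>|H|\<close>, and for every level \<open>j\<close>, writing \<open>c\<^sub>j\<close> for the number of entries \<open>j\<close> and \<open>a\<^sub>j\<close>
  for the number of entries \<open>> j\<close>: \<open>c\<^sub>j\<^sub>+\<^sub>1 \<le> c\<^sub>j\<close> (every node of height \<open>j + 1\<close> has a child of height
  \<open>j\<close>) and \<open>c\<^sub>j \<le> 1 + (k - 1) a\<^sub>j\<close> (the \<open>a\<^sub>j\<close> nodes above level \<open>j\<close> have at most \<open>k a\<^sub>j\<close> children, at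
  least \<open>a\<^sub>j - 1\<close> of which lie above level \<open>j\<close> themselves).  Conversely, a tree is grown
  bottom-up: given a forest realising the entries \<open>\<le> j\<close>, each of the \<open>c\<^sub>j\<^sub>+\<^sub>1\<close> new roots adopts
  one tree of height \<open>j\<close> and up to \<open>k - 1\<close> further trees, and the second inequality keeps the
  number of trees at most \<open>1 + (k - 1) a\<^sub>j\<^sub>+\<^sub>1\<close>, so one tree is left at the top.

  All conditions are counting conditions on values below \<open>n = |H|\<close>, so counting sort decides
  them in linear time, even on a RAM that can only add and subtract.
\<close>

section \<open>Multisets of heights of \<open>k\<close>-ary trees\<close>

lemma count_sum_list: "count (sum_list Ms) x = (\<Sum>M\<leftarrow>Ms. count M x)"
  by (induction Ms) auto

lemma size_sum_list: "size (sum_list (Ms :: 'a multiset list)) = (\<Sum>M\<leftarrow>Ms. size M)"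
  by (induction Ms) auto

lemma height_Node_Max: "ts \<noteq> [] \<Longrightarrow> height (Node ts) = Suc (Max (height ` set ts))"
  using Max.set_eq_fold[of 0 "map height ts"] by (simp add: max_def)

declare height.simps [simp del]

lemma height_child_less: "t \<in> set ts \<Longrightarrow> height t < height (Node ts)"
proof -
  assume "t \<in> set ts"
  then have "ts \<noteq> []" and "height t \<le> Max (height ` set ts)" by auto
  then show ?thesis by (simp add: height_Node_Max)
qed

lemma height_child_max: "ts \<noteq> [] \<Longrightarrow> \<exists>t\<in>set ts. height (Node ts) = Suc (height t)"
  using height_Node_Max[of ts] Max_in[of "height ` set ts"] by fastforce

lemma height_Node_eqI:
  assumes "\<And>t. t \<in> set ts \<Longrightarrow> height t \<le> j" and "s \<in> set ts" and "height s = j"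
  shows "height (Node ts) = Suc j"
  using assms height_Node_Max[of ts] Max_eqI[of "height ` set ts" j] by fastforce

lemma in_heights_le_height: "x \<in># heights t \<Longrightarrow> x \<le> height t"
proof (induction t)
  case (Node ts)
  then show ?case
    using height_child_less by (fastforce simp: height.simps less_imp_le_nat dest: le_less_trans)
qed

lemma count_heights_Node:
  "count (heights (Node ts)) x = (if x = height (Node ts) then 1 else 0) + (\<Sum>s\<leftarrow>ts. count (heights s) x)"
  by (simp add: count_sum_list o_def)

declare heights.simps [simp del]

lemma count_heights_above_height: "height t < x \<Longrightarrow> count (heights t) x = 0"
  using in_heights_le_height[of x t] by (auto simp: count_eq_zero_iff)

lemma sum_list_count_heights_above:
  "height (Node ts) \<le> x \<Longrightarrow> (\<Sum>s\<leftarrow>ts. count (heights s) x) = 0"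
  using height_child_less count_heights_above_height by (fastforce simp: sum_list_eq_0_iff)

lemma count_heights_height: "count (heights t) (height t) = 1"
proof (cases t)
  case (Node ts)
  then show ?thesis
    using sum_list_count_heights_above[of ts "height t"] by (simp add: count_heights_Node)
qed

lemma count_heights_Suc_le: "count (heights t) (Suc j) \<le> count (heights t) j"
proof (induction t)
  case (Node ts)
  show ?case
  proof (cases "Suc j = height (Node ts)")
    case True
    then obtain s where s: "s \<in> set ts" "height s = j"
      using height_child_max[of ts] by (cases "ts = []") (auto simp: height.simps)
    have "1 = count (heights s) j" using count_heights_height[of s] s(2) by simp
    also have "\<dots> \<le> (\<Sum>s\<leftarrow>ts. count (heights s) j)" using s(1) by (intro member_le_sum_list) auto
    finally show ?thesis using True by (simp add: count_heights_Node sum_list_count_heights_above)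
  next
    case False
    have "(\<Sum>s\<leftarrow>ts. count (heights s) (Suc j)) \<le> (\<Sum>s\<leftarrow>ts. count (heights s) j)"
      using Node.IH by (rule sum_list_mono)
    with False show ?thesis by (simp add: count_heights_Node)
  qed
qed

definition count_above :: "nat multiset \<Rightarrow> nat \<Rightarrow> nat" where
  "count_above H j = size (filter_mset (\<lambda>x. j < x) H)"

lemma count_above_heights_Node:
  "j < height (Node ts) \<Longrightarrow> count_above (heights (Node ts)) j = 1 + (\<Sum>s\<leftarrow>ts. count_above (heights s) j)"
  by (simp add: count_above_def heights.simps filter_mset_sum_list size_sum_list o_def)

lemma count_heights_le_branching:
  "kary k t \<Longrightarrow> int (count (heights t) j) \<le> 1 + (int k - 1) * int (count_above (heights t) j)"
proof (induction t)
  case (Node ts)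
  show ?case
  proof (cases "height (Node ts) \<le> j")
    case True
    then have "count_above (heights (Node ts)) j = 0"
      using in_heights_le_height[of _ "Node ts"] by (fastforce simp: count_above_def filter_mset_eq_conv)
    with True show ?thesis
      by (simp add: count_heights_Node sum_list_count_heights_above)
  next
    case False
    have len: "length ts \<le> k" using Node.prems by simp
    have "int (count (heights (Node ts)) j) = (\<Sum>s\<leftarrow>ts. int (count (heights s) j))"
      using False by (simp add: count_heights_Node o_def flip: sum_list_of_nat)
    also have "\<dots> \<le> (\<Sum>s\<leftarrow>ts. 1 + (int k - 1) * int (count_above (heights s) j))"
      using Node by (intro sum_list_mono) auto
    also have "\<dots> = int (length ts) + (int k - 1) * (\<Sum>s\<leftarrow>ts. int (count_above (heights s) j))"
      by (simp add: sum_list_addf sum_list_const_mult sum_list_triv)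
    also have "\<dots> \<le> 1 + (int k - 1) * int (count_above (heights (Node ts)) j)"
      using False len by (simp add: count_above_heights_Node o_def algebra_simps flip: sum_list_of_nat)
    finally show ?thesis .
  qed
qed

lemma height_less_size_heights: "height t < size (heights t)"
proof (induction t)
  case (Node ts)
  show ?case
  proof (cases "ts = []")
    case False
    then obtain s where s: "s \<in> set ts" "height (Node ts) = Suc (height s)"
      using height_child_max by blast
    have "size (heights s) \<le> (\<Sum>s\<leftarrow>ts. size (heights s))"
      using s(1) by (intro member_le_sum_list) auto
    with Node.IH[OF s(1)] s(2) show ?thesis by (simp add: heights.simps size_sum_list o_def)
  qed (simp add: height.simps heights.simps)
qed

definition level_admissible :: "nat \<Rightarrow> nat multiset \<Rightarrow> nat \<Rightarrow> bool" where
  "level_admissible k H j \<longleftrightarrow>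
     count H (Suc j) \<le> count H j \<and> int (count H j) \<le> 1 + (int k - 1) * int (count_above H j)"

definition admissible_heights :: "nat \<Rightarrow> nat multiset \<Rightarrow> bool" where
  "admissible_heights k H \<longleftrightarrow> H \<noteq> {#} \<and> (\<forall>x\<in>#H. x < size H) \<and> (\<forall>j. level_admissible k H j)"

lemma realizable_imp_admissible: "realizable k H \<Longrightarrow> admissible_heights k H"
proof -
  assume "realizable k H"
  then obtain t where t: "kary k t" "heights t = H" by (auto simp: realizable_def)
  have "H \<noteq> {#}" using t(2) by (cases t) (auto simp: heights.simps)
  moreover have "\<forall>x\<in>#H. x < size H"
    using t(2) in_heights_le_height[of _ t] height_less_size_heights[of t] by fastforce
  ultimately show ?thesis
    using count_heights_Suc_le[of t] count_heights_le_branching[OF t(1)] t(2)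
    by (simp add: admissible_heights_def level_admissible_def)
qed

fun grow_level :: "nat \<Rightarrow> tree list \<Rightarrow> tree list \<Rightarrow> tree list" where
  "grow_level k [] es = []"
| "grow_level k (m # ms) es = Node (m # take (k - 1) es) # grow_level k ms (drop (k - 1) es)"

abbreviation forest_heights :: "tree list \<Rightarrow> nat multiset" where
  "forest_heights F \<equiv> sum_list (map heights F)"

lemma forest_heights_take_drop: "forest_heights (take i F) + forest_heights (drop i F) = forest_heights F"
  by (metis append_take_drop_id map_append sum_list_append)

lemma length_grow_level [simp]: "length (grow_level k ms es) = length ms"
  by (induction ms arbitrary: es) auto

lemma grow_level_kary_height:
  assumes "k \<ge> 1" "\<forall>m\<in>set ms. kary k m \<and> height m = j" "\<forall>e\<in>set es. kary k e \<and> height e \<le> j"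
    and "t \<in> set (grow_level k ms es)"
  shows "kary k t \<and> height t = Suc j"
  using assms(2-)
proof (induction ms arbitrary: es)
  case (Cons m ms)
  show ?case
  proof (cases "t \<in> set (grow_level k ms (drop (k - 1) es))")
    case True
    with Cons show ?thesis by (auto dest: in_set_dropD)
  next
    case False
    with Cons.prems have t: "t = Node (m # take (k - 1) es)" by simp
    have "height t = Suc j"
      unfolding t by (rule height_Node_eqI[of _ _ m]) (use Cons.prems in \<open>auto dest: in_set_takeD\<close>)
    with t Cons.prems assms(1) show ?thesis by (auto dest: in_set_takeD)
  qed
qed simp

lemma forest_heights_grow_level:
  assumes "\<forall>m\<in>set ms. height m = j" "\<forall>e\<in>set es. height e \<le> j" "length es \<le> (k - 1) * length ms"
  shows "forest_heights (grow_level k ms es) =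
    replicate_mset (length ms) (Suc j) + forest_heights ms + forest_heights es"
  using assms
proof (induction ms arbitrary: es)
  case (Cons m ms)
  have "height (Node (m # take (k - 1) es)) = Suc j"
    by (rule height_Node_eqI[of _ _ m]) (use Cons.prems in \<open>auto dest: in_set_takeD\<close>)
  moreover have "forest_heights (grow_level k ms (drop (k - 1) es)) =
      replicate_mset (length ms) (Suc j) + forest_heights ms + forest_heights (drop (k - 1) es)"
    using Cons.prems by (intro Cons.IH) (auto dest: in_set_dropD)
  ultimately show ?case
    using forest_heights_take_drop[of "k - 1" es] by (simp add: heights.simps algebra_simps)
qed simp

definition forest_upto :: "nat \<Rightarrow> nat multiset \<Rightarrow> nat \<Rightarrow> tree list \<Rightarrow> bool" where
  "forest_upto k H j F \<longleftrightarrow> (\<forall>t\<in>set F. kary k t \<and> height t \<le> j) \<and>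
     forest_heights F = filter_mset (\<lambda>x. x \<le> j) H \<and>
     int (length F) \<le> 1 + (int k - 1) * int (count_above H j)"

lemma forest_upto_count_roots:
  assumes "forest_upto k H j F"
  shows "length (filter (\<lambda>t. height t = j) F) = count H j"
proof -
  have "count H j = count (forest_heights F) j"
    using assms by (simp add: forest_upto_def)
  also have "\<dots> = (\<Sum>t\<leftarrow>F. count (heights t) j)"
    by (simp add: count_sum_list o_def)
  also have "\<dots> = (\<Sum>t\<leftarrow>F. if height t = j then 1 else 0)"
    using assms count_heights_height count_heights_above_height
    by (intro arg_cong[where f = sum_list] map_cong) (fastforce simp: forest_upto_def)+
  also have "\<dots> = length (filter (\<lambda>t. height t = j) F)"
    by (induction F) auto
  finally show ?thesis by simp
qed

lemma count_above_Suc: "count_above H j = count H (Suc j) + count_above H (Suc j)"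
proof -
  have "filter_mset (\<lambda>x. j < x) H = filter_mset (\<lambda>x. x = Suc j) H + filter_mset (\<lambda>x. Suc j < x) H"
    by (rule multiset_eqI) auto
  then show ?thesis by (simp add: count_above_def filter_eq_replicate_mset)
qed

lemma filter_mset_le_Suc:
  "filter_mset (\<lambda>x. x \<le> Suc j) H = filter_mset (\<lambda>x. x \<le> j) H + replicate_mset (count H (Suc j)) (Suc j)"
  by (rule multiset_eqI) (auto simp: count_replicate_mset)

lemma level_size_bound:
  fixes p r a :: nat
  assumes "k \<ge> 1" and "int (p + r) \<le> 1 + (int k - 1) * int (p + a)"
    and "int p \<le> 1 + (int k - 1) * int a"
  shows "int (p + (r - min r ((k - 1) * p))) \<le> 1 + (int k - 1) * int a"
proof (cases "r \<le> (k - 1) * p")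
  case False
  have "int ((k - 1) * p) = (int k - 1) * int p"
    using assms(1) by (simp add: of_nat_diff)
  with False have "int (p + (r - min r ((k - 1) * p))) = int (p + r) - (int k - 1) * int p"
    by (simp add: of_nat_diff)
  moreover have "(int k - 1) * int (p + a) = (int k - 1) * int p + (int k - 1) * int a"
    by (simp add: algebra_simps)
  ultimately show ?thesis using assms(2) by linarith
qed (use assms(3) in simp)

lemma forest_upto_Suc:
  assumes k: "k \<ge> 1" and F: "forest_upto k H j F"
    and mono: "count H (Suc j) \<le> count H j"
    and branching: "int (count H (Suc j)) \<le> 1 + (int k - 1) * int (count_above H (Suc j))"
  shows "\<exists>F'. forest_upto k H (Suc j) F'"
proof -
  define p where "p = count H (Suc j)"
  define tops where "tops = filter (\<lambda>t. height t = j) F"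
  define ms where "ms = take p tops"
  define R where "R = drop p tops @ filter (\<lambda>t. height t \<noteq> j) F"
  define e where "e = min (length R) ((k - 1) * p)"
  define F' where "F' = grow_level k ms (take e R) @ drop e R"
  have F_trees: "\<forall>t\<in>set F. kary k t \<and> height t \<le> j" using F by (simp add: forest_upto_def)
  have length_tops: "length tops = count H j"
    using forest_upto_count_roots[OF F] by (simp add: tops_def)
  have mset_F: "mset F = mset ms + mset R"
  proof -
    have "mset F = mset tops + mset (filter (\<lambda>t. height t \<noteq> j) F)"
      using multiset_partition[of "mset F" "\<lambda>t. height t = j"] by (simp add: tops_def)
    moreover have "mset tops = mset ms + mset (drop p tops)"
      by (metis append_take_drop_id mset_append ms_def)
    ultimately show ?thesis
      unfolding R_def mset_append by (simp only: add.assoc)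
  qed
  have length_ms: "length ms = p" using length_tops mono by (simp add: ms_def p_def)
  have ms_trees: "\<forall>m\<in>set ms. kary k m \<and> height m = j"
    using F_trees by (auto simp: ms_def tops_def dest: in_set_takeD)
  have R_trees: "\<forall>t\<in>set R. kary k t \<and> height t \<le> j"
    using F_trees by (auto simp: R_def tops_def dest: in_set_dropD)
  have grown: "forest_heights (grow_level k ms (take e R)) =
      replicate_mset p (Suc j) + forest_heights ms + forest_heights (take e R)"
    using forest_heights_grow_level[of ms j "take e R" k] ms_trees R_trees length_ms
    by (auto simp: e_def dest: in_set_takeD)
  have "forest_heights F' = forest_heights (grow_level k ms (take e R)) + forest_heights (drop e R)"
    by (simp add: F'_def)
  also have "\<dots> = replicate_mset p (Suc j) + (forest_heights ms + forest_heights R)"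
    by (simp only: grown add.assoc forest_heights_take_drop)
  also have "\<dots> = replicate_mset p (Suc j) + forest_heights F"
    using mset_F by (metis mset_map sum_mset_sum_list map_append sum_list_append mset_append)
  also have "\<dots> = filter_mset (\<lambda>x. x \<le> Suc j) H"
    using F filter_mset_le_Suc[of j H] by (simp only: forest_upto_def p_def add.commute)
  finally have heights_F': "forest_heights F' = filter_mset (\<lambda>x. x \<le> Suc j) H" .
  have grown_trees: "\<forall>t\<in>set (grow_level k ms (take e R)). kary k t \<and> height t = Suc j"
    using grow_level_kary_height[OF k ms_trees] R_trees by (blast dest: in_set_takeD)
  have trees_F': "\<forall>t\<in>set F'. kary k t \<and> height t \<le> Suc j"
    unfolding F'_def using grown_trees R_trees by (fastforce dest: in_set_dropD)
  have "length F = p + length R"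
    using arg_cong[OF mset_F, of size] length_ms by simp
  then have "int (length F') \<le> 1 + (int k - 1) * int (count_above H (Suc j))"
    using level_size_bound[OF k _ branching[folded p_def]] F count_above_Suc[of H j] length_ms
    by (simp add: F'_def e_def p_def forest_upto_def)
  with heights_F' trees_F' have "forest_upto k H (Suc j) F'" by (simp add: forest_upto_def)
  then show ?thesis ..
qed

lemma admissible_forest_upto:
  assumes k: "k \<ge> 1" and H: "admissible_heights k H"
  shows "\<exists>F. forest_upto k H j F"
proof (induction j)
  case 0
  have "forest_upto k H 0 (replicate (count H 0) (Node []))"
  proof -
    have "forest_heights (replicate n (Node [])) = replicate_mset n 0" for n
      by (induction n) (simp_all add: heights.simps height.simps)
    moreover have "filter_mset (\<lambda>x. x \<le> 0) H = replicate_mset (count H 0) 0"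
      by (simp add: filter_eq_replicate_mset)
    ultimately show ?thesis
      using H by (simp add: forest_upto_def admissible_heights_def level_admissible_def height.simps)
  qed
  then show ?case ..
next
  case (Suc j)
  then show ?case
    using forest_upto_Suc[OF k] H by (auto simp: admissible_heights_def level_admissible_def)
qed

lemma admissible_imp_realizable:
  assumes k: "k \<ge> 1" and H: "admissible_heights k H"
  shows "realizable k H"
proof -
  obtain F where F: "forest_upto k H (size H) F"
    using admissible_forest_upto[OF k H] by blast
  have all: "filter_mset (\<lambda>x. x \<le> size H) H = H"
    using H by (auto simp: admissible_heights_def filter_mset_eq_conv less_imp_le)
  have "count_above H (size H) = 0"
    using H by (auto simp: admissible_heights_def count_above_def filter_mset_eq_conv)
  then have "length F \<le> 1" using F by (simp add: forest_upto_def)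
  moreover have "F \<noteq> []" using F all H by (auto simp: forest_upto_def admissible_heights_def)
  ultimately obtain t where "F = [t]" by (cases F) auto
  with F all show ?thesis by (auto simp: forest_upto_def realizable_def)
qed

theorem realizable_iff_admissible: "k \<ge> 1 \<Longrightarrow> realizable k H \<longleftrightarrow> admissible_heights k H"
  using realizable_imp_admissible admissible_imp_realizable by blast

section \<open>A linear-time decider\<close>

lemma run_halted: "length P \<le> fst s \<Longrightarrow> run P t s = s"
  by (induction t) auto

lemma run_add: "run P (a + b) s = run P b (run P a s)"
  by (induction a arbitrary: s) (auto simp: run_halted)

lemma run_numeral:
  "run P (numeral w) s = (if length P \<le> fst s then s else run P (pred_numeral w) (step P s))"
  by (simp add: numeral_eq_Suc)

definition decides_within :: "instr list \<Rightarrow> config \<Rightarrow> nat \<Rightarrow> bool \<Rightarrow> bool" where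
  "decides_within P s b Q \<longleftrightarrow> (\<exists>t\<le>b. halted P (run P t s) \<and> (snd (run P t s) 0 = 1 \<longleftrightarrow> Q))"

lemma decides_within_run:
  "run P a s = s' \<Longrightarrow> decides_within P s' b Q \<Longrightarrow> decides_within P s (a + b) Q"
  unfolding decides_within_def by (metis add_le_cancel_left run_add)

lemma decides_within_run_to:
  "fst (run P a s) = pc \<Longrightarrow> decides_within P (pc, snd (run P a s)) b Q \<Longrightarrow>
    decides_within P s (a + b) Q"
  by (metis decides_within_run prod.collapse)

lemma decides_within_mono: "decides_within P s b Q \<Longrightarrow> b \<le> b' \<Longrightarrow> decides_within P s b' Q"
  unfolding decides_within_def by (meson order_trans)

lemma decides_within_halted: "length P \<le> fst s \<Longrightarrow> decides_within P s 0 (snd s 0 = 1)"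
  unfolding decides_within_def halted_def by (intro exI[of _ 0]) simp

text \<open>
  Memory layout of \<open>decider\<close> for \<open>n \<ge> 1\<close> input values (the empty input is rejected at pc 0),
  with \<open>A = n + 16 k\<close> (\<open>copy_base\<close>) and \<open>B = A + n + 16\<close> (\<open>count_base\<close>).  Initially only cells 0
  and 1 are free, so \<open>setup_code\<close> adds \<open>k\<close> sixteen times to cell 1 to obtain \<open>A\<close>, parks \<open>k\<close> in
  cell \<open>A\<close>, moves input cells 2--15 to \<open>A + 2, \<dots>, A + 15\<close> and recovers \<open>n = A - 16 k\<close>.  From then
  on cells 1--15 are registers: 1 = \<open>A\<close>, 2 = 1, 3 = \<open>k - 1\<close>, 4 = \<open>n\<close>, 5 = \<open>B\<close>, 6 = \<open>B + n\<close>,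
  12 = 0 (so \<open>Jz 12\<close> is an unconditional jump), 7 and 8 a loop pointer and its bound.
  \<open>copy_code\<close> moves the input cells 16, \<dots>, \<open>n + 1\<close> up by \<open>A\<close>; \<open>count_code\<close> rejects entries \<open>\<ge> n\<close>
  and stores \<open>c\<^sub>v\<close> in cell \<open>B + v\<close> and \<open>(k - 1) c\<^sub>v\<close> in cell \<open>B + n + v\<close> (there is no
  multiplication); \<open>check_code\<close> tests the levels \<open>j = n - 1, \<dots>, 0\<close>, keeping \<open>c\<^sub>j\<^sub>+\<^sub>1\<close> in cell 14 and
  \<open>(k - 1) a\<^sub>j\<close> in cell 13.  Jump targets are absolute: 134 accepts, 136 rejects.
\<close>

definition setup_code :: "instr list" where
  "setup_code =
    [Jz 1 136,
     Add 1 1 0, Add 1 1 0, Add 1 1 0, Add 1 1 0, Add 1 1 0, Add 1 1 0, Add 1 1 0, Add 1 1 0,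
     Add 1 1 0, Add 1 1 0, Add 1 1 0, Add 1 1 0, Add 1 1 0, Add 1 1 0, Add 1 1 0, Add 1 1 0,
     Store 1 0,
     LoadC 0 2, Add 0 0 1, Store 0 2,     LoadC 0 3, Add 0 0 1, Store 0 3,
     LoadC 0 4, Add 0 0 1, Store 0 4,     LoadC 0 5, Add 0 0 1, Store 0 5,
     LoadC 0 6, Add 0 0 1, Store 0 6,     LoadC 0 7, Add 0 0 1, Store 0 7,
     LoadC 0 8, Add 0 0 1, Store 0 8,     LoadC 0 9, Add 0 0 1, Store 0 9,
     LoadC 0 10, Add 0 0 1, Store 0 10,   LoadC 0 11, Add 0 0 1, Store 0 11,
     LoadC 0 12, Add 0 0 1, Store 0 12,   LoadC 0 13, Add 0 0 1, Store 0 13,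
     LoadC 0 14, Add 0 0 1, Store 0 14,   LoadC 0 15, Add 0 0 1, Store 0 15,
     Load 3 1, LoadC 2 1,
     Sub 4 1 3, Sub 4 4 3, Sub 4 4 3, Sub 4 4 3, Sub 4 4 3, Sub 4 4 3, Sub 4 4 3, Sub 4 4 3,
     Sub 4 4 3, Sub 4 4 3, Sub 4 4 3, Sub 4 4 3, Sub 4 4 3, Sub 4 4 3, Sub 4 4 3, Sub 4 4 3,
     Sub 3 3 2, LoadC 5 16, Add 5 5 1, Add 5 5 4, Add 6 5 4, LoadC 12 0,
     LoadC 7 16, LoadC 8 2, Add 8 8 4]"

definition copy_code :: "instr list" where
  "copy_code =
    [Sub 11 7 8, Jneg 11 90, Jz 12 95,
     Load 10 7, Add 9 7 1, Store 9 10, Add 7 7 2, Jz 12 87,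
     LoadC 7 2, Add 7 7 1, Add 8 7 4]"

definition count_code :: "instr list" where
  "count_code =
    [Sub 11 7 8, Jneg 11 101, Jz 12 115,
     Load 9 7, Sub 11 9 4, Jneg 11 105, Jz 12 136,
     Add 10 5 9, Load 11 10, Add 11 11 2, Store 10 11,
     Add 10 6 9, Load 11 10, Add 11 11 3, Store 10 11,
     Add 7 7 2, Jz 12 98,
     Sub 7 4 2, LoadC 13 0, LoadC 14 0]"

definition check_code :: "instr list" where
  "check_code =
    [Jneg 7 134, Add 10 5 7, Load 15 10,
     Sub 11 15 14, Jneg 11 136,
     Sub 11 15 2, Sub 11 11 13, Jneg 11 128, Jz 11 128, Jz 12 136,
     Add 10 6 7, Load 11 10, Add 13 13 11, Add 14 15 12, Sub 7 7 2, Jz 12 118]"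

definition answer_code :: "instr list" where
  "answer_code = [LoadC 0 1, Jz 12 137, LoadC 0 0]"

definition decider :: "instr list" where
  "decider = setup_code @ copy_code @ count_code @ check_code @ answer_code"

lemmas decider_code =
  decider_def[unfolded setup_code_def copy_code_def count_code_def check_code_def answer_code_def,
    simplified]

lemma length_decider [simp]: "length decider = 137"
  by (simp add: decider_code)

lemmas decider_exec = run_numeral decider_code nat_add_distrib nat_mult_distrib

lemma decider_rejects: "decides_within decider (136, m) 1 False"
proof -
  have "run decider 1 (136, m) = (137, m(0 := 0))" by (simp add: decider_exec)
  then have "decides_within decider (136, m) (1 + 0) False"
    by (rule decides_within_run) (use decides_within_halted[of decider "(137, m(0 := 0))"] in simp)
  then show ?thesis by simp
qed

lemma decider_accepts: "m 12 = 0 \<Longrightarrow> decides_within decider (134, m) 2 True"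
proof -
  assume "m 12 = 0"
  then have "run decider 2 (134, m) = (137, m(0 := 1))" by (simp add: decider_exec)
  then have "decides_within decider (134, m) (2 + 0) True"
    by (rule decides_within_run) (use decides_within_halted[of decider "(137, m(0 := 1))"] in simp)
  then show ?thesis by simp
qed

definition copy_base :: "nat \<Rightarrow> nat list \<Rightarrow> nat" where
  "copy_base k hs = length hs + 16 * k"

definition count_base :: "nat \<Rightarrow> nat list \<Rightarrow> nat" where
  "count_base k hs = copy_base k hs + length hs + 16"

definition registers :: "nat \<Rightarrow> nat list \<Rightarrow> (nat \<Rightarrow> int) \<Rightarrow> bool" where
  "registers k hs m \<longleftrightarrow> k \<ge> 1 \<and> m 1 = int (copy_base k hs) \<and> m 2 = 1 \<and> m 3 = int k - 1 \<and>
     m 4 = int (length hs) \<and> m 5 = int (count_base k hs) \<and> m 6 = int (count_base k hs + length hs) \<and>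
     m 12 = 0"

lemma setup_multiply:
  assumes "m 0 = int k" "m 1 = int n" "n \<ge> 1"
  shows "run decider 17 (0, m) = (17, m(1 := 16 * int k + int n))"
  using assms by (simp add: decider_exec)

lemma setup_relocate:
  assumes "m 0 = int k" "m 1 = int A" "16 \<le> A"
  shows "fst (run decider 43 (17, m)) = 60 \<and> (let m' = snd (run decider 43 (17, m)) in
     m' 1 = int A \<and> m' A = int k \<and> (\<forall>j. 2 \<le> j \<longrightarrow> j \<le> 15 \<longrightarrow> m' (A + j) = m j)
     \<and> (\<forall>x. 1 \<le> x \<longrightarrow> x \<noteq> A \<longrightarrow> (x < A + 2 \<or> A + 15 < x) \<longrightarrow> m' x = m x))"
  using assms by (simp add: decider_exec Let_def) (clarify, arith)

lemma setup_registers: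
  assumes "m 1 = int A" "m A = int k" "A = n + 16 * k" "16 \<le> A"
  shows "fst (run decider 27 (60, m)) = 87 \<and> (let m' = snd (run decider 27 (60, m)) in
     m' 1 = int A \<and> m' 2 = 1 \<and> m' 3 = int k - 1 \<and> m' 4 = int n \<and> m' 5 = int (A + n + 16) \<and>
     m' 6 = int (A + n + 16 + n) \<and> m' 12 = 0 \<and> m' 7 = 16 \<and> m' 8 = int (n + 2) \<and>
     (\<forall>x. 16 \<le> x \<longrightarrow> m' x = m x))"
  using assms by (simp add: decider_exec Let_def)

lemma input_simps:
  "input k hs 0 = int k" "input k hs (Suc 0) = int (length hs)"
  "2 \<le> j \<Longrightarrow> j < length hs + 2 \<Longrightarrow> input k hs j = int (hs ! (j - 2))"
  "length hs + 2 \<le> j \<Longrightarrow> input k hs j = 0"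
  by (auto simp: input_def)

definition copy_invariant :: "nat \<Rightarrow> nat list \<Rightarrow> nat \<Rightarrow> (nat \<Rightarrow> int) \<Rightarrow> bool" where
  "copy_invariant k hs p m \<longleftrightarrow> registers k hs m \<and> m 7 = int p \<and> m 8 = int (length hs + 2) \<and>
     16 \<le> p \<and> p \<le> length hs + 16 \<and>
     (\<forall>j. 2 \<le> j \<longrightarrow> j < p \<longrightarrow> j < length hs + 2 \<longrightarrow> m (copy_base k hs + j) = int (hs ! (j - 2))) \<and>
     (\<forall>j. p \<le> j \<longrightarrow> j < length hs + 2 \<longrightarrow> m j = int (hs ! (j - 2))) \<and>
     (\<forall>x. copy_base k hs + p \<le> x \<longrightarrow> m x = 0)"

lemma setup_memory:
  assumes n: "hs \<noteq> []" and k: "k \<ge> 1"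
  obtains m where "run decider 87 (0, input k hs) = (87, m)"
    "m 1 = int (copy_base k hs)" "m 2 = 1" "m 3 = int k - 1" "m 4 = int (length hs)"
    "m 5 = int (count_base k hs)" "m 6 = int (count_base k hs + length hs)" "m 12 = 0"
    "m 7 = 16" "m 8 = int (length hs + 2)"
    "\<And>j. 2 \<le> j \<Longrightarrow> j \<le> 15 \<Longrightarrow> m (copy_base k hs + j) = input k hs j"
    "\<And>x. 16 \<le> x \<Longrightarrow> x < copy_base k hs \<or> copy_base k hs + 15 < x \<Longrightarrow> m x = input k hs x"
proof -
  define A where "A = copy_base k hs"
  define m1 where "m1 = (input k hs)(1 := 16 * int k + int (length hs))"
  have A: "16 \<le> A" "A = length hs + 16 * k" using k by (simp_all add: A_def copy_base_def)
  have r1: "run decider 17 (0, input k hs) = (17, m1)"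
    unfolding m1_def by (rule setup_multiply) (use n in \<open>auto simp: input_simps Suc_le_eq\<close>)
  have "m1 0 = int k" "m1 1 = int A" by (auto simp: m1_def input_simps A)
  note relocate = setup_relocate[OF this A(1)]
  define m2 where "m2 = snd (run decider 43 (17, m1))"
  have r2: "run decider 43 (17, m1) = (60, m2)"
    using relocate unfolding m2_def by (metis prod.collapse)
  have m2: "m2 1 = int A" "m2 A = int k" "\<And>j. 2 \<le> j \<Longrightarrow> j \<le> 15 \<Longrightarrow> m2 (A + j) = m1 j"
    "\<And>x. 1 \<le> x \<Longrightarrow> x \<noteq> A \<Longrightarrow> x < A + 2 \<or> A + 15 < x \<Longrightarrow> m2 x = m1 x"
    using relocate unfolding m2_def Let_def by auto
  note registers = setup_registers[OF m2(1,2) A(2,1)]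
  define m3 where "m3 = snd (run decider 27 (60, m2))"
  have "run decider 27 (60, m2) = (87, m3)"
    using registers unfolding m3_def by (metis prod.collapse)
  with r1 r2 have "run decider 87 (0, input k hs) = (87, m3)"
    using run_add[of decider 17 "43 + 27" "(0, input k hs)"] run_add[of decider 43 27 "(17, m1)"] by simp
  moreover have m3: "\<And>x. 16 \<le> x \<Longrightarrow> m3 x = m2 x"
    using registers unfolding m3_def Let_def by auto
  moreover have "m3 (A + j) = input k hs j" if "2 \<le> j" "j \<le> 15" for j
    using that A(1) m2(3) m3[of "A + j"] by (simp add: m1_def)
  moreover have "m3 x = input k hs x" if "16 \<le> x" "x < A \<or> A + 15 < x" for x
    using that m2(4)[of x] m3[of x] by (auto simp: m1_def)
  ultimately show ?thesis
    using that registers by (simp add: m3_def A_def count_base_def Let_def)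
qed

lemma setup_run:
  assumes n: "hs \<noteq> []" and k: "k \<ge> 1"
  shows "\<exists>m. run decider 87 (0, input k hs) = (87, m) \<and> copy_invariant k hs 16 m"
proof -
  obtain m where run: "run decider 87 (0, input k hs) = (87, m)"
    and regs: "m 1 = int (copy_base k hs)" "m 2 = 1" "m 3 = int k - 1" "m 4 = int (length hs)"
      "m 5 = int (count_base k hs)" "m 6 = int (count_base k hs + length hs)" "m 12 = 0"
      "m 7 = 16" "m 8 = int (length hs + 2)"
    and moved: "\<And>j. 2 \<le> j \<Longrightarrow> j \<le> 15 \<Longrightarrow> m (copy_base k hs + j) = input k hs j"
    and kept: "\<And>x. 16 \<le> x \<Longrightarrow> x < copy_base k hs \<or> copy_base k hs + 15 < x \<Longrightarrow> m x = input k hs x"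
    using setup_memory[OF n k] by blast
  have base: "length hs + 16 \<le> copy_base k hs" using k by (simp add: copy_base_def)
  have "copy_invariant k hs 16 m"
    unfolding copy_invariant_def registers_def
    using regs k base moved kept by (auto simp: input_simps)
  with run show ?thesis by blast
qed

definition copy_mem :: "nat \<Rightarrow> nat list \<Rightarrow> nat \<Rightarrow> (nat \<Rightarrow> int) \<Rightarrow> (nat \<Rightarrow> int)" where
  "copy_mem k hs p m = m(11 := int p - int (length hs + 2), 10 := m p,
     9 := int p + int (copy_base k hs), p + copy_base k hs := m p, 7 := int p + 1)"

lemma copy_step:
  assumes inv: "copy_invariant k hs p m" and p: "p < length hs + 2"
  shows "run decider 7 (87, m) = (87, copy_mem k hs p m)"
    and "copy_invariant k hs (Suc p) (copy_mem k hs p m)"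
proof -
  have base: "length hs + 16 \<le> copy_base k hs" and "m 7 = int p" "m 8 = int (length hs + 2)"
    "m 1 = int (copy_base k hs)" "m 2 = 1" "m 12 = 0" "16 \<le> p"
    using inv by (auto simp: copy_invariant_def registers_def copy_base_def)
  with p show "run decider 7 (87, m) = (87, copy_mem k hs p m)"
    by (simp add: decider_exec add.commute copy_mem_def)
  show "copy_invariant k hs (Suc p) (copy_mem k hs p m)"
    using inv p base unfolding copy_invariant_def registers_def copy_mem_def
    by (intro conjI allI impI) (simp_all add: count_base_def)
qed

definition count_invariant :: "nat \<Rightarrow> nat list \<Rightarrow> nat \<Rightarrow> (nat \<Rightarrow> int) \<Rightarrow> bool" where
  "count_invariant k hs i m \<longleftrightarrow> registers k hs m \<and> m 7 = int (copy_base k hs + 2 + i) \<and>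
     m 8 = int (copy_base k hs + 2 + length hs) \<and> i \<le> length hs \<and>
     (\<forall>j<length hs. m (copy_base k hs + 2 + j) = int (hs ! j)) \<and>
     (\<forall>v<length hs. m (count_base k hs + v) = int (count (mset (take i hs)) v)) \<and>
     (\<forall>v<length hs. m (count_base k hs + length hs + v) = (int k - 1) * int (count (mset (take i hs)) v)) \<and>
     (\<forall>j<i. hs ! j < length hs)"

lemma copy_exit:
  assumes inv: "copy_invariant k hs p m" and p: "length hs + 2 \<le> p"
  shows "\<exists>m'. run decider 6 (87, m) = (98, m') \<and> count_invariant k hs 0 m'"
proof -
  have base: "length hs + 16 \<le> copy_base k hs" and "m 7 = int p" "m 8 = int (length hs + 2)"
    "m 1 = int (copy_base k hs)" "m 2 = 1" "m 12 = 0" "16 \<le> p" "m 4 = int (length hs)"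
    using inv by (auto simp: copy_invariant_def registers_def copy_base_def)
  with p have "run decider 6 (87, m) = (98, m(11 := int p - int (length hs + 2),
      7 := int (copy_base k hs + 2), 8 := int (copy_base k hs + 2 + length hs)))"
    by (simp add: decider_exec add.assoc)
  moreover have "m (copy_base k hs + 2 + j) = int (hs ! j)" if "j < length hs" for j
  proof -
    have "\<forall>i. 2 \<le> i \<longrightarrow> i < p \<longrightarrow> i < length hs + 2 \<longrightarrow> m (copy_base k hs + i) = int (hs ! (i - 2))"
      using inv by (simp add: copy_invariant_def)
    from this[rule_format, of "j + 2"] p that show ?thesis by (simp add: add.assoc)
  qed
  then have "count_invariant k hs 0 (m(11 := int p - int (length hs + 2),
      7 := int (copy_base k hs + 2), 8 := int (copy_base k hs + 2 + length hs)))"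
    using inv p base unfolding copy_invariant_def registers_def count_invariant_def
    by (intro conjI allI impI) (simp_all add: count_base_def)
  ultimately show ?thesis by blast
qed

lemma copy_loop:
  assumes "copy_invariant k hs p m" and cont: "\<And>m'. count_invariant k hs 0 m' \<Longrightarrow> decides_within decider (98, m') b Q"
  shows "decides_within decider (87, m) (7 * (length hs + 2 - p) + 6 + b) Q"
  using assms(1)
proof (induction "length hs + 2 - p" arbitrary: p m)
  case 0
  obtain m' where "run decider 6 (87, m) = (98, m')" "count_invariant k hs 0 m'"
    using copy_exit[OF "0.prems"] "0.hyps" by fastforce
  then show ?case using decides_within_run[of decider 6 "(87, m)"] cont "0.hyps" by simp
next
  case (Suc d)
  then have p: "p < length hs + 2" by simp
  have rest: "decides_within decider (87, copy_mem k hs p m) (7 * (length hs + 2 - Suc p) + 6 + b) Q"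
    using Suc.hyps(1)[of "Suc p"] Suc.hyps(2) copy_step(2)[OF Suc.prems p] by simp
  have "decides_within decider (87, m) (7 + (7 * (length hs + 2 - Suc p) + 6 + b)) Q"
    by (rule decides_within_run[OF copy_step(1)[OF Suc.prems p] rest])
  moreover have "7 + (7 * (length hs + 2 - Suc p) + 6 + b) = 7 * (length hs + 2 - p) + 6 + b"
    using p by simp
  ultimately show ?case by (simp only:)
qed

definition count_mem :: "(nat \<Rightarrow> int) \<Rightarrow> nat \<Rightarrow> nat \<Rightarrow> nat \<Rightarrow> nat \<Rightarrow> int \<Rightarrow> (nat \<Rightarrow> int)" where
  "count_mem m a b n h c = m(9 := int h, b + h := m (b + h) + 1, 10 := int b + int n + int h,
     11 := m (b + n + h) + c, b + n + h := m (b + n + h) + c, 7 := int a + 1)"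

lemma count_run:
  assumes "m 7 = int a" "m 8 = int e" "a < e" "m 4 = int n" "m a = int h" "h < n" "m 5 = int b"
    "m 6 = int (b + n)" "m 2 = 1" "m 3 = c" "m 12 = 0" "16 \<le> b" "16 \<le> a"
  shows "run decider 15 (98, m) = (98, count_mem m a b n h c)"
  using assms by (simp add: decider_exec count_mem_def)

lemma count_step:
  assumes inv: "count_invariant k hs i m" and i: "i < length hs" and h: "hs ! i < length hs"
  defines "m' \<equiv> count_mem m (copy_base k hs + 2 + i) (count_base k hs) (length hs) (hs ! i) (int k - 1)"
  shows "run decider 15 (98, m) = (98, m')" and "count_invariant k hs (Suc i) m'"
proof -
  have base: "length hs + 16 \<le> copy_base k hs" "count_base k hs = copy_base k hs + length hs + 16"
    and "m 1 = int (copy_base k hs)" "m 2 = 1" "m 3 = int k - 1" "m 4 = int (length hs)"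
      "m 5 = int (count_base k hs)" "m 6 = int (count_base k hs + length hs)" "m 12 = 0"
      "m 7 = int (copy_base k hs + 2 + i)" "m 8 = int (copy_base k hs + 2 + length hs)"
      "m (copy_base k hs + 2 + i) = int (hs ! i)"
    using inv i by (auto simp: count_invariant_def registers_def copy_base_def count_base_def)
  with i h show "run decider 15 (98, m) = (98, m')"
    unfolding m'_def by (intro count_run[where e = "copy_base k hs + 2 + length hs"]) auto
  show "count_invariant k hs (Suc i) m'"
    using inv i h base unfolding count_invariant_def registers_def count_mem_def m'_def
    by (intro conjI allI impI) (auto simp: take_Suc_conv_app_nth less_Suc_eq algebra_simps)
qed

lemma count_reject:
  assumes inv: "count_invariant k hs i m" and i: "i < length hs" and h: "length hs \<le> hs ! i"
  shows "decides_within decider (98, m) 7 False"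
proof -
  have "m 4 = int (length hs)" "m 12 = 0" "m 7 = int (copy_base k hs + 2 + i)"
    "m 8 = int (copy_base k hs + 2 + length hs)" "m (copy_base k hs + 2 + i) = int (hs ! i)"
    "16 \<le> copy_base k hs"
    using inv i by (auto simp: count_invariant_def registers_def copy_base_def)
  with i h have "fst (run decider 6 (98, m)) = 136"
    by (simp add: decider_exec)
  from decides_within_run_to[OF this decider_rejects] show ?thesis by simp
qed

lemma count_loop:
  assumes "count_invariant k hs i m"
    and cont: "\<And>m'. count_invariant k hs (length hs) m' \<Longrightarrow> decides_within decider (98, m') b Q"
  shows "decides_within decider (98, m) (15 * (length hs - i) + 7 + b)
    ((\<forall>j\<in>{i..<length hs}. hs ! j < length hs) \<and> Q)"
  using assms(1)
proof (induction "length hs - i" arbitrary: i m)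
  case 0
  then have "i = length hs" by (simp add: count_invariant_def)
  with "0.prems" cont decides_within_mono[of decider _ b Q "7 + b"] show ?case by auto
next
  case (Suc d)
  then have i: "i < length hs" by simp
  show ?case
  proof (cases "hs ! i < length hs")
    case True
    define m' where
      "m' = count_mem m (copy_base k hs + 2 + i) (count_base k hs) (length hs) (hs ! i) (int k - 1)"
    have rest: "decides_within decider (98, m') (15 * (length hs - Suc i) + 7 + b)
        ((\<forall>j\<in>{Suc i..<length hs}. hs ! j < length hs) \<and> Q)"
      using Suc.hyps(1)[of "Suc i"] Suc.hyps(2) count_step(2)[OF Suc.prems i True] by (simp add: m'_def)
    have "decides_within decider (98, m) (15 + (15 * (length hs - Suc i) + 7 + b))
        ((\<forall>j\<in>{Suc i..<length hs}. hs ! j < length hs) \<and> Q)"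
      using decides_within_run[OF count_step(1)[OF Suc.prems i True] rest[unfolded m'_def]] .
    moreover have "15 + (15 * (length hs - Suc i) + 7 + b) = 15 * (length hs - i) + 7 + b"
      using i by simp
    moreover have "(\<forall>j\<in>{Suc i..<length hs}. hs ! j < length hs) \<longleftrightarrow> (\<forall>j\<in>{i..<length hs}. hs ! j < length hs)"
      using True i by (auto simp: Suc_le_eq le_less)
    ultimately show ?thesis by (simp only:)
  next
    case False
    then have "decides_within decider (98, m) (15 * (length hs - i) + 7 + b) False"
      using count_reject[OF Suc.prems i] by (auto elim: decides_within_mono)
    moreover have "((\<forall>j\<in>{i..<length hs}. hs ! j < length hs) \<and> Q) = False" using False i by auto
    ultimately show ?thesis by (simp only:)
  qed
qed

definition check_invariant :: "nat \<Rightarrow> nat list \<Rightarrow> nat \<Rightarrow> (nat \<Rightarrow> int) \<Rightarrow> bool" where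
  "check_invariant k hs i m \<longleftrightarrow> registers k hs m \<and> m 7 = int i - 1 \<and> i \<le> length hs \<and>
     (\<forall>v<length hs. m (count_base k hs + v) = int (count (mset hs) v)) \<and>
     (\<forall>v<length hs. m (count_base k hs + length hs + v) = (int k - 1) * int (count (mset hs) v)) \<and>
     m 13 = (int k - 1) * int (count (mset hs) i + count_above (mset hs) i) \<and>
     m 14 = int (count (mset hs) i) \<and>
     (\<forall>x\<in>#mset hs. x < length hs)"

lemma count_exit:
  assumes inv: "count_invariant k hs (length hs) m"
  shows "\<exists>m'. run decider 6 (98, m) = (118, m') \<and> check_invariant k hs (length hs) m'"
proof -
  have "m 2 = 1" "m 4 = int (length hs)" "m 12 = 0"
    "m 7 = int (copy_base k hs + 2 + length hs)" "m 8 = int (copy_base k hs + 2 + length hs)"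
    using inv by (auto simp: count_invariant_def registers_def)
  then have "run decider 6 (98, m) = (118, m(11 := 0, 7 := int (length hs) - 1, 13 := 0, 14 := 0))"
    by (simp add: decider_exec)
  moreover have bounded: "\<forall>x\<in>#mset hs. x < length hs"
    using inv by (auto simp: count_invariant_def in_set_conv_nth)
  then have "count (mset hs) (length hs) = 0" "count_above (mset hs) (length hs) = 0"
    by (auto simp: count_eq_zero_iff count_above_def filter_mset_eq_conv)
  with bounded have "check_invariant k hs (length hs)
      (m(11 := 0, 7 := int (length hs) - 1, 13 := 0, 14 := 0))"
    using inv unfolding check_invariant_def count_invariant_def registers_def
    by (auto simp: count_base_def)
  ultimately show ?thesis by blast
qed

lemma check_reject_decrease:
  assumes "m 7 = int j" "m 5 = int b" "m 14 = int c'" "m (b + j) = int c" "c < c'" "16 \<le> b"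
  shows "fst (run decider 5 (118, m)) = 136"
  using assms by (simp add: decider_exec)

lemma check_reject_branching:
  assumes "m 7 = int j" "m 5 = int b" "m 2 = 1" "m 12 = 0" "m 14 = int c'" "m 13 = T" "m (b + j) = int c"
    "c' \<le> c" "int c - 1 - T > 0" "16 \<le> b"
  shows "fst (run decider 10 (118, m)) = 136"
  using assms by (simp add: decider_exec)

definition check_advanced :: "(nat \<Rightarrow> int) \<Rightarrow> (nat \<Rightarrow> int) \<Rightarrow> nat \<Rightarrow> int \<Rightarrow> int \<Rightarrow> nat \<Rightarrow> bool" where
  "check_advanced m m' j T d c \<longleftrightarrow> m' 7 = int j - 1 \<and> m' 13 = T + d \<and> m' 14 = int c \<and>
     (\<forall>x. x \<notin> {7, 10, 11, 13, 14, 15} \<longrightarrow> m' x = m x)"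

lemma check_continue:
  assumes "m 7 = int j" "m 5 = int b" "m 6 = int (b + n)" "m 2 = 1" "m 12 = 0" "m 14 = int c'"
    "m 13 = T" "m (b + j) = int c" "m (b + n + j) = d" "c' \<le> c" "int c - 1 - T \<le> 0" "16 \<le> b"
  shows "\<exists>t\<le>15. fst (run decider t (118, m)) = 118 \<and>
    check_advanced m (snd (run decider t (118, m))) j T d c"
proof (cases "int c - 1 - T = 0")
  case True
  with assms have "fst (run decider 15 (118, m)) = 118 \<and>
      check_advanced m (snd (run decider 15 (118, m))) j T d c"
    by (simp add: decider_exec check_advanced_def)
  then show ?thesis by blast
next
  case False
  with assms have "fst (run decider 14 (118, m)) = 118 \<and>
      check_advanced m (snd (run decider 14 (118, m))) j T d c"
    by (simp add: decider_exec check_advanced_def)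
  then show ?thesis by (intro exI[of _ 14]) simp
qed

definition levels_admissible :: "nat \<Rightarrow> nat multiset \<Rightarrow> nat \<Rightarrow> bool" where
  "levels_admissible k H i \<longleftrightarrow> (\<forall>j<i. level_admissible k H j)"

lemma check_invariant_SucD:
  assumes "check_invariant k hs (Suc j) m"
  shows "j < length hs" "m 7 = int j" "m 5 = int (count_base k hs)"
    "m 6 = int (count_base k hs + length hs)" "m 2 = 1" "m 12 = 0"
    "m 14 = int (count (mset hs) (Suc j))"
    "m 13 = (int k - 1) * int (count_above (mset hs) j)"
    "m (count_base k hs + j) = int (count (mset hs) j)"
    "m (count_base k hs + length hs + j) = (int k - 1) * int (count (mset hs) j)"
  using assms count_above_Suc[of "mset hs" j]
  by (auto simp: check_invariant_def registers_def)

lemma check_reject: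
  assumes inv: "check_invariant k hs (Suc j) m" and bad: "\<not> level_admissible k (mset hs) j"
  shows "decides_within decider (118, m) 11 False"
proof -
  note cells = check_invariant_SucD[OF inv]
  have base: "16 \<le> count_base k hs" by (simp add: count_base_def)
  from bad consider "count (mset hs) j < count (mset hs) (Suc j)"
    | "count (mset hs) (Suc j) \<le> count (mset hs) j"
      "int (count (mset hs) j) - 1 - (int k - 1) * int (count_above (mset hs) j) > 0"
    by (fastforce simp: level_admissible_def)
  then show ?thesis
  proof cases
    case 1
    then have "fst (run decider 5 (118, m)) = 136"
      using check_reject_decrease[OF cells(2,3,7,9) _ base] by simp
    from decides_within_run_to[OF this decider_rejects] show ?thesis
      by (auto elim: decides_within_mono)
  next
    case 2
    then have "fst (run decider 10 (118, m)) = 136"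
      using check_reject_branching[OF cells(2,3,5,6,7,8,9) _ _ base] by simp
    from decides_within_run_to[OF this decider_rejects] show ?thesis by simp
  qed
qed

lemma check_advance:
  assumes inv: "check_invariant k hs (Suc j) m" and good: "level_admissible k (mset hs) j"
  shows "\<exists>t\<le>15. \<exists>m'. run decider t (118, m) = (118, m') \<and> check_invariant k hs j m'"
proof -
  define c where "c = count (mset hs) j"
  define T where "T = (int k - 1) * int (count_above (mset hs) j)"
  note cells = check_invariant_SucD[OF inv, folded c_def T_def]
  have base: "16 \<le> count_base k hs" by (simp add: count_base_def)
  obtain t where t: "t \<le> 15" "fst (run decider t (118, m)) = 118"
    and adv: "check_advanced m (snd (run decider t (118, m))) j T ((int k - 1) * int c) c"
    using check_continue[OF cells(2-10) _ _ base] good by (force simp: level_admissible_def c_def T_def)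
  define m' where "m' = snd (run decider t (118, m))"
  have keep: "\<And>x. x \<notin> {7, 10, 11, 13, 14, 15} \<Longrightarrow> m' x = m x"
    and "m' 7 = int j - 1" "m' 13 = T + (int k - 1) * int c" "m' 14 = int c"
    using adv unfolding check_advanced_def m'_def by auto
  moreover have "T + (int k - 1) * int c = (int k - 1) * int (count (mset hs) j + count_above (mset hs) j)"
    by (simp add: T_def c_def algebra_simps)
  moreover have "m' (count_base k hs + v) = m (count_base k hs + v)"
    "m' (count_base k hs + length hs + v) = m (count_base k hs + length hs + v)" for v
    using base by (auto intro!: keep)
  moreover have "m' x = m x" if "x \<in> {1, 2, 3, 4, 5, 6, 12}" for x
    using that by (auto intro!: keep)
  ultimately have "check_invariant k hs j m'"
    using inv cells(1) unfolding check_invariant_def registers_def by (simp add: c_def)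
  moreover have "run decider t (118, m) = (118, m')"
    using t(2) by (simp add: m'_def prod_eq_iff)
  ultimately show ?thesis using t(1) by blast
qed

lemma check_loop:
  assumes "check_invariant k hs i m"
  shows "decides_within decider (118, m) (15 * i + 3) (levels_admissible k (mset hs) i)"
  using assms
proof (induction i arbitrary: m)
  case 0
  then have "m 7 = -1" "m 12 = 0" by (auto simp: check_invariant_def registers_def)
  then have "run decider 1 (118, m) = (134, m)" by (simp add: decider_exec)
  from decides_within_run[OF this decider_accepts] \<open>m 12 = 0\<close> show ?case
    by (simp add: levels_admissible_def numeral_eq_Suc)
next
  case (Suc j)
  show ?case
  proof (cases "level_admissible k (mset hs) j")
    case True
    then obtain t m' where "t \<le> 15" "run decider t (118, m) = (118, m')" "check_invariant k hs j m'"
      using check_advance[OF Suc.prems] by blast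
    then have "decides_within decider (118, m) (t + (15 * j + 3)) (levels_admissible k (mset hs) j)"
      using decides_within_run Suc.IH by blast
    with True \<open>t \<le> 15\<close> show ?thesis
      by (auto simp: levels_admissible_def less_Suc_eq elim: decides_within_mono)
  next
    case False
    then have "\<not> levels_admissible k (mset hs) (Suc j)" by (auto simp: levels_admissible_def)
    with check_reject[OF Suc.prems False] show ?thesis
      by (auto elim: decides_within_mono)
  qed
qed

lemma levels_admissible_iff:
  assumes k: "k \<ge> 1" and bounded: "\<forall>x\<in>#H. x < n"
  shows "levels_admissible k H n \<longleftrightarrow> (\<forall>j. level_admissible k H j)"
proof -
  have "count H j = 0" if "n \<le> j" for j
    using bounded that by (auto simp: count_eq_zero_iff)
  then have "level_admissible k H j" if "n \<le> j" for j
    using that k by (simp add: level_admissible_def)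
  then show ?thesis by (auto simp: levels_admissible_def not_less[symmetric])
qed

lemma admissible_heights_iff_levels:
  assumes k: "k \<ge> 1" and n: "hs \<noteq> []"
  shows "admissible_heights k (mset hs) \<longleftrightarrow>
    (\<forall>j\<in>{0..<length hs}. hs ! j < length hs) \<and> levels_admissible k (mset hs) (length hs)"
proof -
  have "(\<forall>j\<in>{0..<length hs}. hs ! j < length hs) \<longleftrightarrow> (\<forall>x\<in>#mset hs. x < length hs)"
    unfolding set_mset_mset all_set_conv_all_nth by auto
  with n levels_admissible_iff[OF k] show ?thesis by (auto simp: admissible_heights_def)
qed

theorem decider_correct:
  assumes k: "k \<ge> 1"
  shows "decides_within decider (0, input k hs) (150 + 40 * length hs) (realizable k (mset hs))"
proof (cases "hs = []")
  case True
  then have "run decider 1 (0, input k hs) = (136, input k hs)"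
    by (simp add: decider_exec input_def)
  from decides_within_run[OF this decider_rejects]
  have "decides_within decider (0, input k hs) (1 + 1) False" .
  moreover have "\<not> realizable k (mset hs)"
    using True realizable_imp_admissible by (auto simp: admissible_heights_def)
  ultimately show ?thesis by (auto elim: decides_within_mono)
next
  case False
  define n where "n = length hs"
  define Q where "Q = ((\<forall>j\<in>{0..<n}. hs ! j < n) \<and> levels_admissible k (mset hs) n)"
  have check: "decides_within decider (98, m) (6 + (15 * n + 3)) (levels_admissible k (mset hs) n)"
    if inv: "count_invariant k hs n m" for m
  proof -
    obtain m' where "run decider 6 (98, m) = (118, m')" "check_invariant k hs n m'"
      using count_exit[of k hs m] inv by (auto simp: n_def)
    then show ?thesis using decides_within_run check_loop by blast
  qed
  have count: "decides_within decider (98, m) (15 * n + 7 + (6 + (15 * n + 3))) Q"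
    if "count_invariant k hs 0 m" for m
    using count_loop[OF that, of "6 + (15 * n + 3)"] check by (simp add: n_def Q_def)
  obtain m where "run decider 87 (0, input k hs) = (87, m)" "copy_invariant k hs 16 m"
    using setup_run[OF False k] by blast
  from decides_within_run[OF this(1) copy_loop[OF this(2) count]]
  have "decides_within decider (0, input k hs)
      (87 + (7 * (n + 2 - 16) + 6 + (15 * n + 7 + (6 + (15 * n + 3))))) Q"
    by (simp add: n_def)
  moreover have "Q = realizable k (mset hs)"
    using admissible_heights_iff_levels[OF k False] realizable_iff_admissible[OF k] by (simp add: Q_def n_def)
  ultimately show ?thesis by (auto simp: n_def elim: decides_within_mono)
qed

lemma self_le_mult_log2: "real n \<le> real n * log 2 (real n + 2)"
proof -
  have "1 \<le> log 2 (real n + 2)" by simp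
  then show ?thesis by (simp add: mult_le_cancel_left1)
qed

theorem mainTheorem9:
  shows "\<exists>(P :: instr list) (c :: real). \<forall>(k :: nat) (hs :: nat list). k \<ge> 1 \<longrightarrow>
           (\<exists>t. real t \<le> c * (real (length hs) * log 2 (real (length hs) + 2) + 1)
              \<and> halted P (run P t (0, input k hs))
              \<and> (snd (run P t (0, input k hs)) 0 = 1 \<longleftrightarrow> realizable k (mset hs)))"
proof (rule exI[of _ decider], rule exI[of _ 150], intro allI impI)
  fix k :: nat and hs :: "nat list"
  assume "k \<ge> 1"
  then obtain t where t: "t \<le> 150 + 40 * length hs" "halted decider (run decider t (0, input k hs))"
    "snd (run decider t (0, input k hs)) 0 = 1 \<longleftrightarrow> realizable k (mset hs)"
    using decider_correct unfolding decides_within_def by blast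
  moreover have "real t \<le> 150 * (real (length hs) * log 2 (real (length hs) + 2) + 1)"
    using of_nat_mono[OF t(1), where 'a = real] self_le_mult_log2[of "length hs"] by simp
  ultimately show "\<exists>t. real t \<le> 150 * (real (length hs) * log 2 (real (length hs) + 2) + 1) \<and>
    halted decider (run decider t (0, input k hs)) \<and>
    (snd (run decider t (0, input k hs)) 0 = 1 \<longleftrightarrow> realizable k (mset hs))"
    by blast
qed

end
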